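(* Let $C\subseteq\mathbb{R}^q$ be a nonempty closed convex cone that is not a linear subspace, $\mathcal{X}\subseteq\mathbb{R}^m$ a nonempty convex set, and $\Gamma:\mathbb{R}^m\to\mathbb{R}^q$ a $C$-convex map. Let $k\in\operatorname{ri} C$ and $e^1,\dots,e^{q-1}\in\mathbb{R}^q$ such that $e^1,\dots,e^{q-1},k$ are linearly independent; let $E=(e^1,\dots,e^{q-1})$ and $T=(e^1,\dots,e^{q-1},k)$. Let $\varphi(y)=\inf\{r\in\mathbb{R} : rk-y\in C\}$ and $f(z)=\inf_{x\in\mathcal{X}}\varphi(\Gamma(x)-Ez)$ for $z\in\mathbb{R}^{q-1}$. For $w\in\mathbb{R}^{q-1}$ let $c^*(w)=T^{-T}\begin{pmatrix}w\\1\end{pmatrix}$. Then the conjugate of $f$ is $$f^*(w)=\begin{cases}\left[\langle c^*(-w),\Gamma(\cdot)\rangle+\delta_{\mathcal{X}}\right]^*(0) & \text{if } c^*(-w)\in C^+,\\ +\infty & \text{otherwise,}\end{cases}$$ where $C^+=\{c^*\in\mathbb{R}^q : \langle c^*,c\rangle\ge 0\ \forall c\in C\}$.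
   Context: $\Gamma$ is $C$-convex if $(1-t)\Gamma(x_1)+t\Gamma(x_2)-\Gamma((1-t)x_1+tx_2)\in C$ for all $x_1,x_2$, $t\in[0,1]$. $\delta_{\mathcal{X}}$ is the indicator function of $\mathcal{X}$; $g^*(p)=\sup_x(\langle p,x\rangle-g(x))$ denotes the Legendre–Fenchel conjugate, so $[\langle c,\Gamma\rangle+\delta_{\mathcal{X}}]^*(0)=-\inf_{x\in\mathcal{X}}\langle c,\Gamma(x)\rangle$. $T^{-T}$ is the inverse of the transpose of $T$. *)

theory Defs
  imports "HOL-Analysis.Analysis"
begin

text \<open>R^q is modelled as real^('p option) with 'p of cardinality q-1, so that
  R^{q-1} = real^'p and the index None corresponds to the last coordinate.\<close>

definition C_convex :: "('b::real_vector) set \<Rightarrow> ('a::real_vector \<Rightarrow> 'b) \<Rightarrow> bool" where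
  "C_convex C \<Gamma> \<longleftrightarrow> (\<forall>x1 x2 t. 0 \<le> t \<and> t \<le> 1 \<longrightarrow>
     (1 - t) *\<^sub>R \<Gamma> x1 + t *\<^sub>R \<Gamma> x2 - \<Gamma> ((1 - t) *\<^sub>R x1 + t *\<^sub>R x2) \<in> C)"

definition dual_cone_plus :: "('a::real_inner) set \<Rightarrow> 'a set" where
  "dual_cone_plus C = {c. \<forall>x\<in>C. 0 \<le> inner c x}"

definition lf_conjugate :: "('a::real_inner \<Rightarrow> ereal) \<Rightarrow> 'a \<Rightarrow> ereal" where
  "lf_conjugate g p = (SUP x. ereal (inner p x) - g x)"

definition ind_fn :: "'a set \<Rightarrow> 'a \<Rightarrow> ereal" where
  "ind_fn X x = (if x \<in> X then 0 else \<infinity>)"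

definition scal_phi :: "('a::real_vector) set \<Rightarrow> 'a \<Rightarrow> 'a \<Rightarrow> ereal" where
  "scal_phi C k y = Inf {ereal r | r. r *\<^sub>R k - y \<in> C}"

definition matT :: "real^'p^('p option) \<Rightarrow> real^('p option) \<Rightarrow> real^('p option)^('p option)" where
  "matT E k = (\<chi> i j. case j of Some j' \<Rightarrow> E $ i $ j' | None \<Rightarrow> k $ i)"

definition cstar :: "real^'p^('p option) \<Rightarrow> real^('p option) \<Rightarrow> real^'p \<Rightarrow> real^('p option)" where
  "cstar E k w = matrix_inv (transpose (matT E k)) *v
      (\<chi> j. case j of Some j' \<Rightarrow> w $ j' | None \<Rightarrow> 1)"

end

theory Submission
  imports Defs
begin

text \<open>Let \<open>c = c\<^sup>*(-w)\<close>. By construction \<open>\<langle>c, k\<rangle> = 1\<close> and \<open>\<langle>c, E z\<rangle> = -\<langle>w, z\<rangle>\<close>, and since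
  \<open>e\<^sup>1, \<dots>, e\<^sup>q\<^sup>-\<^sup>1, k\<close> is a basis every point of \<open>\<real>\<^sup>q\<close> is \<open>E z + r k\<close>. Writing
  \<open>\<Gamma>(x) + c\<^sub>1 = E z + r k\<close> with \<open>c\<^sub>1 \<in> C\<close> gives \<open>f(z) \<le> r\<close>, hence
  \<open>f\<^sup>*(w) \<ge> \<langle>w, z\<rangle> - r = -\<langle>c, \<Gamma>(x) + c\<^sub>1\<rangle>\<close>.
  If \<open>c \<in> C\<^sup>+\<close>, then \<open>\<phi>(y) \<ge> \<langle>c, y\<rangle>\<close>, which yields the matching upper bound
  \<open>f\<^sup>*(w) \<le> sup {-\<langle>c, \<Gamma>(x)\<rangle> | x \<in> X}\<close>, and the lower bound with \<open>c\<^sub>1 = 0\<close> gives equality.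
  Otherwise some \<open>c\<^sub>0 \<in> C\<close> has \<open>\<langle>c, c\<^sub>0\<rangle> < 0\<close>, and \<open>c\<^sub>1 = t c\<^sub>0\<close> with \<open>t \<rightarrow> \<infinity>\<close>
  drives the lower bound to \<open>\<infinity>\<close>. No convexity or closedness is needed.\<close>

lemma scal_phi_le:
  assumes "r *\<^sub>R k - y \<in> C"
  shows "scal_phi C k y \<le> ereal r"
  unfolding scal_phi_def using assms by (intro Inf_lower) blast

lemma inner_le_scal_phi:
  assumes "c \<in> dual_cone_plus C" and "inner c k = 1"
  shows "ereal (inner c y) \<le> scal_phi C k y"
  unfolding scal_phi_def
proof (rule Inf_greatest, clarify)
  fix r assume "r *\<^sub>R k - y \<in> C"
  with assms(1) have "0 \<le> inner c (r *\<^sub>R k - y)"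
    unfolding dual_cone_plus_def by blast
  with assms(2) show "ereal (inner c y) \<le> ereal r"
    by (simp add: inner_diff_right)
qed

lemma lf_conjugate_plus_ind_fn_zero:
  "lf_conjugate (\<lambda>x. ereal (g x) + ind_fn X x) 0 = (SUP x\<in>X. ereal (- g x))"
proof -
  have pointwise: "ereal (inner 0 x) - (ereal (g x) + ind_fn X x)
      = (if x \<in> X then ereal (- g x) else -\<infinity>)" for x
    by (simp add: ind_fn_def zero_ereal_def)
  have "lf_conjugate (\<lambda>x. ereal (g x) + ind_fn X x) 0
      = (SUP x. if x \<in> X then ereal (- g x) else -\<infinity>)"
    unfolding lf_conjugate_def by (rule SUP_cong[OF refl pointwise])
  also have "\<dots> = (SUP x\<in>X. ereal (- g x))"
  proof (rule antisym)
    show "(SUP x. if x \<in> X then ereal (- g x) else -\<infinity>) \<le> (SUP x\<in>X. ereal (- g x))"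
    proof (rule SUP_least)
      fix x
      show "(if x \<in> X then ereal (- g x) else -\<infinity>) \<le> (SUP x\<in>X. ereal (- g x))"
        using SUP_upper[of x X "\<lambda>x. ereal (- g x)"] by simp
    qed
    show "(SUP x\<in>X. ereal (- g x)) \<le> (SUP x. if x \<in> X then ereal (- g x) else -\<infinity>)"
    proof (rule SUP_least)
      fix x assume "x \<in> X"
      then show "ereal (- g x) \<le> (SUP x. if x \<in> X then ereal (- g x) else -\<infinity>)"
        using SUP_upper[of x UNIV "\<lambda>x. if x \<in> X then ereal (- g x) else -\<infinity>"] by simp
    qed
  qed
  finally show ?thesis .
qed

context
  fixes f :: "'b::real_inner \<Rightarrow> ereal" and L :: "'b \<Rightarrow> 'a::real_inner"
    and \<Gamma> :: "'c \<Rightarrow> 'a" and C :: "'a set" and X :: "'c set" and k c :: 'a and w :: 'b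
  assumes f_eq: "\<And>z. f z = (INF x\<in>X. scal_phi C k (\<Gamma> x - L z))"
    and inner_c_k: "inner c k = 1"
    and inner_c_L: "\<And>z. inner c (L z) = - inner w z"
begin

lemma lf_conjugate_lower_bound:
  assumes "x \<in> X" "c1 \<in> C" "\<Gamma> x + c1 = L z + r *\<^sub>R k"
  shows "ereal (- inner c (\<Gamma> x + c1)) \<le> lf_conjugate f w"
proof -
  have "f z \<le> scal_phi C k (\<Gamma> x - L z)"
    unfolding f_eq using assms(1) by (rule INF_lower)
  also have "\<dots> \<le> ereal r"
    by (rule scal_phi_le) (metis assms(2,3) add_diff_cancel_left' diff_diff_eq2)
  finally have "ereal (inner w z) - ereal r \<le> ereal (inner w z) - f z"
    by (rule ereal_minus_mono[OF order_refl])
  also have "\<dots> \<le> lf_conjugate f w"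
    unfolding lf_conjugate_def by (rule SUP_upper) simp
  finally show ?thesis
    using assms(3) by (simp add: inner_add_right inner_c_k inner_c_L)
qed

lemma lf_conjugate_le_dual:
  assumes "c \<in> dual_cone_plus C" "X \<noteq> {}"
  shows "lf_conjugate f w \<le> (SUP x\<in>X. ereal (- inner c (\<Gamma> x)))"
  unfolding lf_conjugate_def
proof (rule SUP_least)
  fix z
  have "ereal (inner w z) - scal_phi C k (\<Gamma> x - L z) \<le> ereal (- inner c (\<Gamma> x))" for x
  proof -
    have "ereal (inner w z) - scal_phi C k (\<Gamma> x - L z)
        \<le> ereal (inner w z) - ereal (inner c (\<Gamma> x - L z))"
      by (rule ereal_minus_mono[OF order_refl inner_le_scal_phi[OF assms(1) inner_c_k]])
    then show ?thesis by (simp add: inner_diff_right inner_c_L)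
  qed
  then have "(SUP x\<in>X. ereal (inner w z) - scal_phi C k (\<Gamma> x - L z))
      \<le> (SUP x\<in>X. ereal (- inner c (\<Gamma> x)))"
    by (rule SUP_mono')
  then show "ereal (inner w z) - f z \<le> (SUP x\<in>X. ereal (- inner c (\<Gamma> x)))"
    using SUP_ereal_minus_right[OF assms(2)] by (simp add: f_eq)
qed

lemma lf_conjugate_eq_dual:
  assumes "c \<in> dual_cone_plus C" "X \<noteq> {}" "0 \<in> C"
    and span: "\<And>y. \<exists>z r. y = L z + r *\<^sub>R k"
  shows "lf_conjugate f w = (SUP x\<in>X. ereal (- inner c (\<Gamma> x)))"
proof (rule antisym)
  show "lf_conjugate f w \<le> (SUP x\<in>X. ereal (- inner c (\<Gamma> x)))"
    using assms(1,2) by (rule lf_conjugate_le_dual)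
  show "(SUP x\<in>X. ereal (- inner c (\<Gamma> x))) \<le> lf_conjugate f w"
  proof (rule SUP_least)
    fix x assume "x \<in> X"
    obtain z r where "\<Gamma> x + 0 = L z + r *\<^sub>R k" using span by blast
    from lf_conjugate_lower_bound[OF \<open>x \<in> X\<close> \<open>0 \<in> C\<close> this]
    show "ereal (- inner c (\<Gamma> x)) \<le> lf_conjugate f w" by simp
  qed
qed

lemma lf_conjugate_eq_top:
  assumes "c \<notin> dual_cone_plus C" "X \<noteq> {}" "cone C"
    and span: "\<And>y. \<exists>z r. y = L z + r *\<^sub>R k"
  shows "lf_conjugate f w = \<infinity>"
proof (rule ereal_top)
  fix B
  obtain c0 where c0: "c0 \<in> C" "inner c c0 < 0"
    using assms(1) unfolding dual_cone_plus_def by force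
  obtain x0 where "x0 \<in> X" using assms(2) by blast
  define t where "t = max 0 ((B + inner c (\<Gamma> x0)) / (- inner c c0))"
  have "t \<ge> 0" unfolding t_def by simp
  have "B + inner c (\<Gamma> x0) \<le> t * (- inner c c0)"
    using c0(2) unfolding t_def by (simp add: pos_divide_le_eq max_mult_distrib_right)
  then have "ereal B \<le> ereal (- inner c (\<Gamma> x0 + t *\<^sub>R c0))"
    by (simp add: inner_add_right algebra_simps)
  also obtain z r where "\<Gamma> x0 + t *\<^sub>R c0 = L z + r *\<^sub>R k" using span by blast
  then have "ereal (- inner c (\<Gamma> x0 + t *\<^sub>R c0)) \<le> lf_conjugate f w"
    using \<open>x0 \<in> X\<close> mem_cone[OF assms(3) c0(1) \<open>t \<ge> 0\<close>] by (intro lf_conjugate_lower_bound)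
  finally show "ereal B \<le> lf_conjugate f w" .
qed

end

lemma sum_UNIV_option:
  "(\<Sum>j\<in>(UNIV::'p::finite option set). g j) = g None + (\<Sum>j\<in>UNIV. g (Some j))"
  by (simp add: UNIV_option_conv sum.reindex)

lemma matT_mult_vec: "matT E k *v a = E *v (\<chi> j. a $ Some j) + (a $ None) *\<^sub>R k"
  by (simp add: vec_eq_iff matrix_vector_mult_def matT_def sum_UNIV_option algebra_simps)

lemma invertible_matT:
  assumes "\<forall>a. (\<Sum>j\<in>UNIV. a j *\<^sub>R column j (matT E k)) = 0 \<longrightarrow> (\<forall>j. a j = 0)"
  shows "invertible (matT E k)"
proof -
  have "x = 0" if "matT E k *v x = 0" for x
  proof -
    from that have "(\<Sum>j\<in>UNIV. (x $ j) *\<^sub>R column j (matT E k)) = 0"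
      by (simp add: matrix_mult_sum scalar_mult_eq_scaleR)
    with assms show "x = 0" by (simp add: vec_eq_iff)
  qed
  then show ?thesis using matrix_left_invertible_ker invertible_left_inverse by blast
qed

lemma matT_span:
  assumes "invertible (matT E k)"
  shows "\<exists>z r. y = E *v z + r *\<^sub>R k"
proof -
  obtain A' where "matT E k ** A' = mat 1" using assms invertible_def by blast
  then have "matT E k *v (A' *v y) = y" by (simp add: matrix_vector_mul_assoc)
  then show ?thesis by (metis matT_mult_vec)
qed

lemma transpose_matT_mult_cstar:
  assumes "invertible (matT E k)"
  shows "transpose (matT E k) *v cstar E k u = (\<chi> j. case j of Some j' \<Rightarrow> u $ j' | None \<Rightarrow> 1)"
proof -
  have "invertible (transpose (matT E k))" using assms transpose_invertible by blast
  then have "transpose (matT E k) ** matrix_inv (transpose (matT E k)) = mat 1"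
    unfolding matrix_inv_def invertible_def by (rule someI_ex[THEN conjunct1])
  then show ?thesis unfolding cstar_def by (simp add: matrix_vector_mul_assoc)
qed

lemma inner_cstar:
  assumes "invertible (matT E k)"
  shows "inner (cstar E k u) (E *v z + r *\<^sub>R k) = inner u z + r"
proof -
  define a where "a = (\<chi> j. case j of Some j' \<Rightarrow> z $ j' | None \<Rightarrow> r)"
  have "E *v z + r *\<^sub>R k = matT E k *v a"
    by (simp add: matT_mult_vec a_def)
  then have "inner (cstar E k u) (E *v z + r *\<^sub>R k) = inner (transpose (matT E k) *v cstar E k u) a"
    by (metis dot_lmul_matrix transpose_transpose vector_transpose_matrix)
  also have "\<dots> = inner (\<chi> j. case j of Some j' \<Rightarrow> u $ j' | None \<Rightarrow> 1) a"
    by (simp only: transpose_matT_mult_cstar[OF assms])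
  also have "\<dots> = inner u z + r"
    by (simp add: a_def inner_vec_def sum_UNIV_option add.commute)
  finally show ?thesis .
qed

theorem proposition5p5:
  fixes C :: "(real^('p::finite option)) set"
    and X :: "(real^('m::finite)) set"
    and \<Gamma> :: "real^'m \<Rightarrow> real^('p option)"
    and k :: "real^('p option)"
    and E :: "real^'p^('p option)"
    and f :: "real^'p \<Rightarrow> ereal"
  assumes "C \<noteq> {}" "closed C" "convex C" "cone C" "\<not> subspace C"
    and "X \<noteq> {}" "convex X"
    and "C_convex C \<Gamma>"
    and "k \<in> rel_interior C"
    and "\<forall>a. (\<Sum>j\<in>UNIV. a j *\<^sub>R column j (matT E k)) = 0 \<longrightarrow> (\<forall>j. a j = 0)"
    and "\<forall>z. f z = (INF x\<in>X. scal_phi C k (\<Gamma> x - E *v z))"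
  shows "lf_conjugate f w =
    (if cstar E k (-w) \<in> dual_cone_plus C
     then lf_conjugate (\<lambda>x. ereal (inner (cstar E k (-w)) (\<Gamma> x)) + ind_fn X x) 0
     else \<infinity>)"
proof -
  have inv: "invertible (matT E k)" using assms(10) by (rule invertible_matT)
  note span = matT_span[OF inv]
  have c_k: "inner (cstar E k (-w)) k = 1"
    using inner_cstar[OF inv, of "-w" 0 1] by simp
  have c_E: "inner (cstar E k (-w)) (E *v z) = - inner w z" for z
    using inner_cstar[OF inv, of "-w" z 0] by simp
  have "0 \<in> C" using assms(1,4) cone_contains_0 by blast
  note f_eq = assms(11)[rule_format]
  show ?thesis
  proof (cases "cstar E k (-w) \<in> dual_cone_plus C")
    case True
    from lf_conjugate_eq_dual[where L = "\<lambda>z. E *v z", OF f_eq c_k c_E True assms(6) \<open>0 \<in> C\<close> span]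
    show ?thesis using True by (simp only: lf_conjugate_plus_ind_fn_zero if_True)
  next
    case False
    from lf_conjugate_eq_top[where L = "\<lambda>z. E *v z", OF f_eq c_k c_E False assms(6,4) span]
    show ?thesis using False by (simp only: if_False)
  qed
qed

end
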